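(* Let $T$ be a balanced tree. Then $T$ is unmixed if and only if (1) $\mathrm{height}(T)\le 3$, (2) for all $v\in V_2$, $|N(v)\cap V_1|=1$, and (3) for all $v\in V_1$, $|N(v)\cap V_2|\le 1$.
   Context: $N(v)=\{u: uv\in E\}$, $N(D)=\bigcup_{v\in D}N(v)$. A leaf is a vertex of degree 1; the height of a vertex is its minimal distance to a leaf (an isolated vertex has height 0); $V_k$ is the set of vertices of height $k$; $\mathrm{height}(T)=\max\{k:V_k\neq\emptyset\}$. A tree is balanced if no two adjacent vertices have the same height. A TD-set is $D\subseteq V$ with $N(D)=V$, minimal if no proper subset is a TD-set; $T$ is unmixed if all minimal TD-sets have the same size. *)

theory Defs
  imports Main
begin

definition simple_graph :: "'a set \<Rightarrow> 'a set set \<Rightarrow> bool" where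
  "simple_graph V E \<longleftrightarrow> finite V \<and> (\<forall>e\<in>E. \<exists>u v. e = {u, v} \<and> u \<noteq> v \<and> u \<in> V \<and> v \<in> V)"

definition nbhd :: "'a set \<Rightarrow> 'a set set \<Rightarrow> 'a \<Rightarrow> 'a set" where
  "nbhd V E v = {u \<in> V. {u, v} \<in> E}"

definition nbhd_set :: "'a set \<Rightarrow> 'a set set \<Rightarrow> 'a set \<Rightarrow> 'a set" where
  "nbhd_set V E D = (\<Union>v\<in>D. nbhd V E v)"

definition is_walk :: "'a set \<Rightarrow> 'a set set \<Rightarrow> 'a list \<Rightarrow> bool" where
  "is_walk V E xs \<longleftrightarrow> xs \<noteq> [] \<and> set xs \<subseteq> V \<and>
     (\<forall>i. Suc i < length xs \<longrightarrow> {xs ! i, xs ! Suc i} \<in> E)"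

definition connected_graph :: "'a set \<Rightarrow> 'a set set \<Rightarrow> bool" where
  "connected_graph V E \<longleftrightarrow>
     (\<forall>u\<in>V. \<forall>v\<in>V. \<exists>xs. is_walk V E xs \<and> hd xs = u \<and> last xs = v)"

definition is_cycle :: "'a set \<Rightarrow> 'a set set \<Rightarrow> 'a list \<Rightarrow> bool" where
  "is_cycle V E xs \<longleftrightarrow> is_walk V E xs \<and> length xs \<ge> 3 \<and> distinct xs \<and> {last xs, hd xs} \<in> E"

definition is_tree :: "'a set \<Rightarrow> 'a set set \<Rightarrow> bool" where
  "is_tree V E \<longleftrightarrow> simple_graph V E \<and> V \<noteq> {} \<and> connected_graph V E \<and>
     (\<nexists>xs. is_cycle V E xs)"

definition is_leaf :: "'a set \<Rightarrow> 'a set set \<Rightarrow> 'a \<Rightarrow> bool" where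
  "is_leaf V E v \<longleftrightarrow> v \<in> V \<and> card (nbhd V E v) = 1"

definition dist :: "'a set \<Rightarrow> 'a set set \<Rightarrow> 'a \<Rightarrow> 'a \<Rightarrow> nat" where
  "dist V E u v = (LEAST n. \<exists>xs. is_walk V E xs \<and> hd xs = u \<and> last xs = v \<and> length xs = Suc n)"

definition vheight :: "'a set \<Rightarrow> 'a set set \<Rightarrow> 'a \<Rightarrow> nat" where
  "vheight V E v = (if nbhd V E v = {} then 0
                    else (LEAST k. \<exists>l. is_leaf V E l \<and> dist V E v l = k))"

definition height_class :: "'a set \<Rightarrow> 'a set set \<Rightarrow> nat \<Rightarrow> 'a set" where
  "height_class V E k = {v \<in> V. vheight V E v = k}"

definition tree_height :: "'a set \<Rightarrow> 'a set set \<Rightarrow> nat" where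
  "tree_height V E = Max {k. height_class V E k \<noteq> {}}"

definition balanced :: "'a set \<Rightarrow> 'a set set \<Rightarrow> bool" where
  "balanced V E \<longleftrightarrow> (\<forall>u\<in>V. \<forall>v\<in>V. {u, v} \<in> E \<longrightarrow> vheight V E u \<noteq> vheight V E v)"

definition td_set :: "'a set \<Rightarrow> 'a set set \<Rightarrow> 'a set \<Rightarrow> bool" where
  "td_set V E D \<longleftrightarrow> D \<subseteq> V \<and> nbhd_set V E D = V"

definition minimal_td_set :: "'a set \<Rightarrow> 'a set set \<Rightarrow> 'a set \<Rightarrow> bool" where
  "minimal_td_set V E D \<longleftrightarrow> td_set V E D \<and> (\<forall>D'. D' \<subset> D \<longrightarrow> \<not> td_set V E D')"

definition unmixed :: "'a set \<Rightarrow> 'a set set \<Rightarrow> bool" where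
  "unmixed V E \<longleftrightarrow> (\<forall>D1 D2. minimal_td_set V E D1 \<and> minimal_td_set V E D2 \<longrightarrow> card D1 = card D2)"

end

theory Submission
  imports Defs
begin

text \<open>
  In a balanced tree the heights of adjacent vertices differ by exactly one, so heights alternate
  in parity along every edge.

  Sufficiency: under the three conditions every minimal TD-set \<open>D\<close> contains all vertices of
  height 1 (each supports a leaf) and no vertex of height 3 (its private neighbour would have
  height 2 and hence already a height-1 neighbour in \<open>D\<close>). The remaining elements of \<open>D\<close> have
  height 0 or 2, and sending each to its unique height-1 neighbour is a bijection onto the
  height-1 vertices, so \<open>|D| = 2 |V\<^sub>1|\<close> for every minimal \<open>D\<close>.

  Necessity: for each violated condition we exhibit a TD-set \<open>C = (V - N(Q)) \<union> F\<close>, with \<open>Q\<close> a set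
  of odd-height vertices, in which every \<open>f \<in> F\<close> is the only \<open>C\<close>-neighbour of some \<open>q \<in> Q\<close>.
  Then every minimal TD-set inside \<open>C\<close> contains \<open>F\<close>, and trading a part \<open>R\<close> of \<open>F\<close> for a
  smaller set \<open>A\<close> that dominates the same vertices gives a smaller TD-set, hence minimal TD-sets
  of two different sizes.
\<close>

section \<open>Walks\<close>

fun walk :: "'a set \<Rightarrow> 'a set set \<Rightarrow> 'a list \<Rightarrow> bool" where
  "walk V E [] = False"
| "walk V E [a] = (a \<in> V)"
| "walk V E (a # b # xs) = ({a, b} \<in> E \<and> a \<in> V \<and> walk V E (b # xs))"

lemma walk_not_Nil: "walk V E xs \<Longrightarrow> xs \<noteq> []"
  by (cases xs) auto

lemma walk_Cons: "walk V E xs \<Longrightarrow> {a, hd xs} \<in> E \<Longrightarrow> a \<in> V \<Longrightarrow> walk V E (a # xs)"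
  by (cases xs) auto

lemma walk_append:
  "walk V E xs \<Longrightarrow> walk V E ys \<Longrightarrow> {last xs, hd ys} \<in> E \<Longrightarrow> walk V E (xs @ ys)"
proof (induction xs rule: walk.induct)
  case (2 V E a)
  then show ?case by (cases ys) auto
qed auto

lemma walk_append_tl:
  "walk V E xs \<Longrightarrow> walk V E ys \<Longrightarrow> last xs = hd ys \<Longrightarrow> walk V E (xs @ tl ys)"
proof (induction xs rule: walk.induct)
  case (2 V E a)
  then show ?case by (cases ys) auto
qed auto

lemma walk_appendD1: "walk V E (xs @ ys) \<Longrightarrow> xs \<noteq> [] \<Longrightarrow> walk V E xs"
proof (induction xs rule: walk.induct)
  case (2 V E a)
  then show ?case by (cases ys) auto
qed auto

lemma walk_appendD2: "walk V E (xs @ ys) \<Longrightarrow> ys \<noteq> [] \<Longrightarrow> walk V E ys"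
proof (induction xs)
  case (Cons a xs)
  then show ?case by (cases xs; cases ys) auto
qed simp

lemma walk_rev: "walk V E xs \<Longrightarrow> walk V E (rev xs)"
proof (induction xs rule: walk.induct)
  case (3 V E a b xs)
  then have "walk V E (rev (b # xs) @ [a])"
    by (intro walk_append) (auto simp: insert_commute elim: walk.elims)
  then show ?case by simp
qed auto

lemma walk_set: "walk V E xs \<Longrightarrow> set xs \<subseteq> V"
  by (induction xs rule: walk.induct) auto

lemma walk_suffix:
  assumes "walk V E xs" "k \<in> set xs"
  obtains ys where "walk V E (k # ys)" "last (k # ys) = last xs" "set (k # ys) \<subseteq> set xs"
proof -
  obtain zs ys where xs: "xs = zs @ k # ys" using split_list assms(2) by metis
  then have "walk V E (k # ys)" using assms(1) walk_appendD2 by blast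
  then show ?thesis using that xs by auto
qed

lemma walk_distinct:
  assumes "walk V E xs"
  shows "\<exists>ys. walk V E ys \<and> hd ys = hd xs \<and> last ys = last xs \<and> distinct ys \<and> set ys \<subseteq> set xs"
  using assms
proof (induction "length xs" arbitrary: xs rule: less_induct)
  case less
  show ?case
  proof (cases "distinct xs")
    case True
    then show ?thesis using less.prems by blast
  next
    case False
    then obtain as y bs cs where xs: "xs = (as @ [y]) @ (bs @ [y]) @ cs"
      using not_distinct_decomp by fastforce
    have "walk V E (as @ [y])"
      using less.prems walk_appendD1 unfolding xs by blast
    moreover have "walk V E (y # cs)"
      using less.prems walk_appendD2[of V E "as @ [y] @ bs" "y # cs"] unfolding xs by simp
    ultimately have "walk V E ((as @ [y]) @ tl (y # cs))" by (intro walk_append_tl) auto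
    then have walk: "walk V E (as @ y # cs)" by simp
    have "length (as @ y # cs) < length xs" using xs by simp
    then obtain ys where ys: "walk V E ys" "hd ys = hd (as @ y # cs)" "last ys = last (as @ y # cs)"
      "distinct ys" "set ys \<subseteq> set (as @ y # cs)"
      using less.hyps walk by blast
    have "hd (as @ y # cs) = hd xs" using xs by (cases as) auto
    moreover have "last (as @ y # cs) = last xs" using xs by (cases cs) auto
    moreover have "set (as @ y # cs) \<subseteq> set xs" using xs by auto
    ultimately show ?thesis using ys by auto
  qed
qed

lemma is_walk_iff_walk: "is_walk V E xs \<longleftrightarrow> walk V E xs"
proof (induction xs rule: walk.induct)
  case (3 V E a b xs)
  let ?P = "\<lambda>ys. \<forall>i. Suc i < length ys \<longrightarrow> {ys ! i, ys ! Suc i} \<in> E"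
  have "?P (a # b # xs) \<longleftrightarrow> {a, b} \<in> E \<and> ?P (b # xs)"
  proof
    assume ab: "{a, b} \<in> E \<and> ?P (b # xs)"
    show "?P (a # b # xs)"
    proof (intro allI impI)
      fix i assume "Suc i < length (a # b # xs)"
      then show "{(a # b # xs) ! i, (a # b # xs) ! Suc i} \<in> E" using ab by (cases i) auto
    qed
  qed (metis Suc_less_eq length_Cons nth_Cons_0 nth_Cons_Suc zero_less_Suc)
  then show ?case using 3 by (auto simp: is_walk_def)
qed (auto simp: is_walk_def)

section \<open>Total dominating sets\<close>

lemma td_set_iff: "td_set V E D \<longleftrightarrow> D \<subseteq> V \<and> (\<forall>v\<in>V. \<exists>x\<in>D. {v, x} \<in> E)"
  unfolding td_set_def nbhd_set_def nbhd_def by blast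

lemma td_set_mem_if_unique_neighbour:
  assumes "td_set V E D" "D \<subseteq> C" "p \<in> V" "nbhd V E p \<inter> C = {f}"
  shows "f \<in> D"
proof -
  obtain x where "x \<in> D" "{p, x} \<in> E" using assms(1,3) unfolding td_set_iff by blast
  moreover have "x \<in> V" using assms(1) \<open>x \<in> D\<close> unfolding td_set_def by blast
  ultimately have "x \<in> nbhd V E p \<inter> C" using assms(2) unfolding nbhd_def by (auto simp: insert_commute)
  then show ?thesis using \<open>x \<in> D\<close> assms(4) by auto
qed

lemma ex_minimal_td_subset:
  assumes "finite V" "td_set V E C"
  obtains X where "X \<subseteq> C" "minimal_td_set V E X"
proof -
  obtain X where X: "X \<subseteq> C" "td_set V E X"
    and least: "\<And>Y. Y \<subseteq> C \<Longrightarrow> td_set V E Y \<Longrightarrow> card X \<le> card Y"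
    using ex_has_least_nat[of "\<lambda>Y. Y \<subseteq> C \<and> td_set V E Y" C card] assms(2) by blast
  have "finite X" using X(2) assms(1) finite_subset unfolding td_set_def by blast
  have "minimal_td_set V E X"
    unfolding minimal_td_set_def
  proof (intro conjI allI impI notI)
    fix Y assume "Y \<subset> X" "td_set V E Y"
    then have "card Y < card X" "card X \<le> card Y"
      using \<open>finite X\<close> psubset_card_mono least X(1) by auto
    then show False by simp
  qed (fact X(2))
  then show ?thesis using X(1) that by blast
qed

lemma minimal_td_set_private_neighbour:
  assumes "minimal_td_set V E D" "d \<in> D"
  obtains v where "v \<in> V" "{v, d} \<in> E" "\<And>x. x \<in> D \<Longrightarrow> {v, x} \<in> E \<Longrightarrow> x = d"
proof -
  have D: "td_set V E D" and "\<not> td_set V E (D - {d})"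
    using assms unfolding minimal_td_set_def by blast+
  then obtain v where "v \<in> V" "\<forall>x\<in>D - {d}. {v, x} \<notin> E"
    unfolding td_set_iff by blast
  moreover obtain x where "x \<in> D" "{v, x} \<in> E" using D \<open>v \<in> V\<close> unfolding td_set_iff by blast
  ultimately show ?thesis using that by blast
qed

text \<open>Each \<open>f \<in> F\<close> is forced into every TD-set inside \<open>C\<close>; so a minimal one, \<open>X\<close>, contains \<open>F\<close>,
  and \<open>(X - R) \<union> A\<close> is a smaller TD-set.\<close>

lemma not_unmixed_by_exchange:
  assumes "finite V" and C: "td_set V E C" and "F \<subseteq> C"
    and forced: "\<forall>f\<in>F. \<exists>p\<in>V. nbhd V E p \<inter> C = {f}"
    and "R \<subseteq> F" "A \<subseteq> V" "card A < card R"
    and cover: "\<forall>r\<in>R. \<forall>v\<in>V. {v, r} \<in> E \<longrightarrow> (\<exists>x\<in>A \<union> (F - R). {v, x} \<in> E)"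
  shows "\<not> unmixed V E"
proof
  assume unmixed: "unmixed V E"
  obtain X where "X \<subseteq> C" and X: "minimal_td_set V E X"
    using ex_minimal_td_subset[OF assms(1) C] .
  then have "td_set V E X" unfolding minimal_td_set_def by blast
  have "F \<subseteq> X"
  proof
    fix f assume "f \<in> F"
    then obtain p where "p \<in> V" "nbhd V E p \<inter> C = {f}" using forced by blast
    then show "f \<in> X" using td_set_mem_if_unique_neighbour \<open>td_set V E X\<close> \<open>X \<subseteq> C\<close> by metis
  qed
  let ?Y = "(X - R) \<union> A"
  have "td_set V E ?Y"
    unfolding td_set_iff
  proof (intro conjI ballI)
    show "?Y \<subseteq> V" using \<open>td_set V E X\<close> \<open>A \<subseteq> V\<close> unfolding td_set_def by blast
    fix v assume "v \<in> V"
    then obtain x where "x \<in> X" "{v, x} \<in> E" using \<open>td_set V E X\<close> unfolding td_set_iff by blast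
    show "\<exists>y\<in>?Y. {v, y} \<in> E"
    proof (cases "x \<in> R")
      case True
      then obtain y where "y \<in> A \<union> (F - R)" "{v, y} \<in> E" using cover \<open>v \<in> V\<close> \<open>{v, x} \<in> E\<close> by blast
      then show ?thesis using \<open>F \<subseteq> X\<close> by blast
    qed (use \<open>x \<in> X\<close> \<open>{v, x} \<in> E\<close> in blast)
  qed
  then obtain Y where "Y \<subseteq> ?Y" and Y: "minimal_td_set V E Y"
    using ex_minimal_td_subset[OF assms(1)] by blast
  have "finite X" "finite A"
    using \<open>td_set V E X\<close> \<open>A \<subseteq> V\<close> assms(1) finite_subset unfolding td_set_def by blast+
  have "R \<subseteq> X" using \<open>R \<subseteq> F\<close> \<open>F \<subseteq> X\<close> by blast
  have "card Y \<le> card ?Y" using \<open>Y \<subseteq> ?Y\<close> \<open>finite X\<close> \<open>finite A\<close> by (simp add: card_mono)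
  also have "\<dots> \<le> card (X - R) + card A" by (rule card_Un_le)
  also have "\<dots> < card X"
    using card_Diff_subset[OF finite_subset[OF \<open>R \<subseteq> X\<close> \<open>finite X\<close>] \<open>R \<subseteq> X\<close>]
      card_mono[OF \<open>finite X\<close> \<open>R \<subseteq> X\<close>] \<open>card A < card R\<close> by linarith
  finally have "card Y < card X" .
  moreover have "card Y = card X" using unmixed X Y unfolding unmixed_def by blast
  ultimately show False by simp
qed

lemma unmixed_edgeless: "E = {} \<Longrightarrow> V \<noteq> {} \<Longrightarrow> unmixed V E"
  unfolding unmixed_def minimal_td_set_def td_set_iff by auto

lemma dist_le_walk:
  assumes "walk V E xs"
  shows "dist V E (hd xs) (last xs) \<le> length xs - 1"
proof -
  have "length xs = Suc (length xs - 1)" using walk_not_Nil[OF assms] by simp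
  then have "\<exists>ys. is_walk V E ys \<and> hd ys = hd xs \<and> last ys = last xs \<and> length ys = Suc (length xs - 1)"
    using assms is_walk_iff_walk by metis
  then show ?thesis unfolding dist_def by (rule Least_le)
qed

lemma vheight_edgeless: "E = {} \<Longrightarrow> vheight V E v = 0"
  unfolding vheight_def nbhd_def by simp

lemma tree_height_le_iff:
  assumes "finite V" "V \<noteq> {}"
  shows "tree_height V E \<le> n \<longleftrightarrow> (\<forall>v\<in>V. vheight V E v \<le> n)"
proof -
  have "{k. height_class V E k \<noteq> {}} = vheight V E ` V" unfolding height_class_def by auto
  then show ?thesis unfolding tree_height_def using assms by simp
qed

section \<open>Trees\<close>

locale nontrivial_tree =
  fixes V :: "'a set" and E :: "'a set set"
  assumes is_tree: "is_tree V E" and edges_nonempty: "E \<noteq> {}"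
begin

abbreviation N where "N \<equiv> nbhd V E"
abbreviation h where "h \<equiv> vheight V E"

lemma finite_V: "finite V"
  using is_tree unfolding is_tree_def simple_graph_def by blast

lemma edge_vertices: "{a, b} \<in> E \<Longrightarrow> a \<in> V \<and> b \<in> V \<and> a \<noteq> b"
  using is_tree unfolding is_tree_def simple_graph_def by (metis doubleton_eq_iff)

lemma edge_exists: "\<exists>a b. {a, b} \<in> E"
proof -
  obtain e where "e \<in> E" using edges_nonempty by blast
  moreover obtain a b where "e = {a, b}"
    using is_tree \<open>e \<in> E\<close> unfolding is_tree_def simple_graph_def by blast
  ultimately show ?thesis by blast
qed

lemma mem_nbhd_iff: "a \<in> N b \<longleftrightarrow> {a, b} \<in> E"
  using edge_vertices unfolding nbhd_def by auto

lemma mem_nbhd_sym: "a \<in> N b \<longleftrightarrow> b \<in> N a"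
  by (simp add: mem_nbhd_iff insert_commute)

lemma finite_nbhd: "finite (N v)"
  using finite_V unfolding nbhd_def by simp

lemma walk_Cons_Cons_iff: "walk V E (a # b # xs) \<longleftrightarrow> {a, b} \<in> E \<and> walk V E (b # xs)"
  using edge_vertices by auto

lemma connected: "u \<in> V \<Longrightarrow> v \<in> V \<Longrightarrow> \<exists>xs. walk V E xs \<and> hd xs = u \<and> last xs = v"
  using is_tree unfolding is_tree_def connected_graph_def by (simp add: is_walk_iff_walk)

lemma no_detour:
  assumes "{v, a} \<in> E" "{v, b} \<in> E" "a \<noteq> b" "walk V E xs" "hd xs = a" "last xs = b" "v \<notin> set xs"
  shows False
proof -
  obtain ys where ys: "walk V E ys" "hd ys = a" "last ys = b" "distinct ys" "set ys \<subseteq> set xs"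
    using walk_distinct[OF assms(4)] assms(5,6) by blast
  obtain c d zs where "ys = c # d # zs"
    using ys(2,3) assms(3) walk_not_Nil[OF ys(1)] by (cases ys rule: remdups_adj.cases) auto
  then have "is_cycle V E (v # ys)"
    using ys assms(1,2,7) edge_vertices
    unfolding is_cycle_def is_walk_iff_walk by (auto simp: insert_commute)
  then show False using is_tree unfolding is_tree_def by blast
qed

lemma branch_ends_distinct:
  assumes "{v, a} \<in> E" "{v, b} \<in> E" "a \<noteq> b" "walk V E xs" "walk V E ys" "hd xs = a" "hd ys = b"
    "v \<notin> set xs" "v \<notin> set ys"
  shows "last xs \<noteq> last ys"
proof
  assume ends: "last xs = last ys"
  have "ys \<noteq> []" using walk_not_Nil assms(5) by blast
  have "walk V E (xs @ tl (rev ys))"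
    using walk_append_tl[OF assms(4) walk_rev[OF assms(5)]] ends \<open>ys \<noteq> []\<close> by (simp add: hd_rev)
  moreover have "last (xs @ tl (rev ys)) = b"
  proof (cases "tl (rev ys) = []")
    case True
    then have "ys = [b]" using \<open>ys \<noteq> []\<close> assms(7) by (cases ys rule: rev_cases) auto
    then show ?thesis using True ends by simp
  next
    case False
    then show ?thesis using assms(7) \<open>ys \<noteq> []\<close> by (simp add: last_tl last_rev)
  qed
  moreover have "hd (xs @ tl (rev ys)) = a" using assms(6) walk_not_Nil[OF assms(4)] by simp
  moreover have "set (tl (rev ys)) \<subseteq> set ys" using list.set_sel(2)[of "rev ys"] \<open>ys \<noteq> []\<close> by auto
  then have "v \<notin> set (xs @ tl (rev ys))" using assms(8,9) by auto
  ultimately show False using no_detour assms(1-3) by blast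
qed

lemma leaf_exists: "\<exists>l. is_leaf V E l"
proof -
  obtain a b where ab: "{a, b} \<in> E" using edge_exists by blast
  let ?path = "\<lambda>xs. walk V E xs \<and> distinct xs \<and> 2 \<le> length xs"
  have "?path [b, a]" using ab edge_vertices by (auto simp: insert_commute)
  moreover have "\<forall>xs. ?path xs \<longrightarrow> length xs < Suc (card V)"
  proof (intro allI impI)
    fix xs assume "?path xs"
    then have "card (set xs) = length xs" "set xs \<subseteq> V" using walk_set by (auto simp: distinct_card)
    then show "length xs < Suc (card V)" using card_mono[OF finite_V, of "set xs"] by simp
  qed
  ultimately obtain xs where xs: "?path xs" and longest: "\<forall>ys. ?path ys \<longrightarrow> length ys \<le> length xs"
    using ex_has_greatest_nat[of ?path "[b, a]" length "Suc (card V)"] by blast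
  then obtain q p rs where xs_eq: "xs = q # p # rs" by (auto simp: numeral_2_eq_2 Suc_le_length_iff)
  have qp: "{q, p} \<in> E" using xs xs_eq by simp
  have "N q = {p}"
  proof (intro equalityI subsetI)
    fix c assume "c \<in> N q"
    then have qc: "{q, c} \<in> E" by (simp add: mem_nbhd_iff insert_commute)
    show "c \<in> {p}"
    proof (rule ccontr)
      assume "c \<notin> {p}"
      show False
      proof (cases "c \<in> set xs")
        case False
        have "walk V E (c # xs)"
          using walk_Cons[of V E xs c] xs xs_eq edge_vertices[OF qc] qc by (simp add: insert_commute)
        then have "?path (c # xs)" using xs False by simp
        then show False using longest xs_eq by (metis impossible_Cons)
      next
        case True
        have "c \<noteq> q" using qc edge_vertices by blast
        then have "c \<in> set rs" using True \<open>c \<notin> {p}\<close> xs_eq by simp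
        then obtain ss ts where rs: "rs = ss @ c # ts" by (meson split_list)
        have "walk V E ((p # ss @ [c]) @ ts)" using xs xs_eq rs by simp
        then have "walk V E (p # ss @ [c])" using walk_appendD1 by blast
        moreover have "q \<notin> set (p # ss @ [c])" using xs xs_eq rs by auto
        ultimately show False using no_detour[OF qp qc, of "p # ss @ [c]"] \<open>c \<notin> {p}\<close> by auto
      qed
    qed
  next
    fix c assume "c \<in> {p}"
    then show "c \<in> N q" using qp by (simp add: mem_nbhd_iff insert_commute)
  qed
  moreover have "q \<in> V" using qp edge_vertices by blast
  ultimately show ?thesis unfolding is_leaf_def by auto
qed

lemma nbhd_nonempty:
  assumes "v \<in> V"
  shows "N v \<noteq> {}"
proof -
  obtain a b where "{a, b} \<in> E" using edge_exists by blast
  then obtain c where c: "c \<in> V" "c \<noteq> v" using edge_vertices by metis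
  obtain xs where xs: "walk V E xs" "hd xs = v" "last xs = c" using connected[OF assms c(1)] by blast
  then obtain d ys where "xs = v # d # ys" using c(2) by (cases xs rule: remdups_adj.cases) auto
  then have "d \<in> N v" using xs(1) by (simp add: mem_nbhd_iff insert_commute)
  then show ?thesis by blast
qed

lemma leaf_neighbour_unique:
  assumes "is_leaf V E l" "{l, a} \<in> E" "{l, b} \<in> E"
  shows "a = b"
proof -
  obtain u where "N l = {u}" using assms(1) unfolding is_leaf_def by (metis One_nat_def card_1_singleton_iff)
  moreover have "a \<in> N l" "b \<in> N l" using assms(2,3) by (simp_all add: mem_nbhd_iff insert_commute)
  ultimately show ?thesis by simp
qed

lemma nbhd_leaf: "is_leaf V E l \<Longrightarrow> {l, u} \<in> E \<Longrightarrow> N l = {u}"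
  using leaf_neighbour_unique mem_nbhd_iff by (auto simp: insert_commute)

lemma hub_walks_neighbour_unique:
  assumes walks: "\<forall>ws\<in>Ws. walk V E ws \<and> last ws = c"
    and "v \<notin> (\<Union>ws\<in>Ws. set ws)" "{v, n1} \<in> E" "{v, n2} \<in> E"
    and "n1 \<in> nbhd_set V E (\<Union>ws\<in>Ws. set ws)" "n2 \<in> nbhd_set V E (\<Union>ws\<in>Ws. set ws)"
  shows "n1 = n2"
proof (rule ccontr)
  assume "n1 \<noteq> n2"
  have path_to_hub: "\<exists>ys. walk V E (n # ys) \<and> last (n # ys) = c \<and> v \<notin> set (n # ys)"
    if vn: "{v, n} \<in> E" and "n \<in> nbhd_set V E (\<Union>ws\<in>Ws. set ws)" for n
  proof -
    obtain ws k where "ws \<in> Ws" "k \<in> set ws" "{n, k} \<in> E"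
      using \<open>n \<in> nbhd_set V E _\<close> unfolding nbhd_set_def nbhd_def by blast
    then obtain ys where ys: "walk V E (k # ys)" "last (k # ys) = c" "set (k # ys) \<subseteq> set ws"
      using walk_suffix walks by metis
    have "walk V E (n # k # ys)" using ys(1) \<open>{n, k} \<in> E\<close> edge_vertices by simp
    moreover have "v \<noteq> n" using vn edge_vertices by blast
    ultimately show ?thesis using ys \<open>ws \<in> Ws\<close> assms(2) by (intro exI[of _ "k # ys"]) auto
  qed
  obtain ys1 ys2 where "walk V E (n1 # ys1)" "last (n1 # ys1) = c" "v \<notin> set (n1 # ys1)"
    "walk V E (n2 # ys2)" "last (n2 # ys2) = c" "v \<notin> set (n2 # ys2)"
    using path_to_hub assms(3-6) by metis
  then show False using branch_ends_distinct[OF assms(3,4) \<open>n1 \<noteq> n2\<close>, of "n1 # ys1" "n2 # ys2"] by simp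
qed

lemma walk_of_dist:
  assumes "u \<in> V" "v \<in> V"
  obtains xs where "walk V E xs" "hd xs = u" "last xs = v" "length xs = Suc (dist V E u v)"
proof -
  obtain xs where "walk V E xs" "hd xs = u" "last xs = v" using connected[OF assms] by blast
  then have "\<exists>n ys. is_walk V E ys \<and> hd ys = u \<and> last ys = v \<and> length ys = Suc n"
    using walk_not_Nil is_walk_iff_walk by (metis Suc_pred length_greater_0_conv)
  then have "\<exists>ys. is_walk V E ys \<and> hd ys = u \<and> last ys = v \<and> length ys = Suc (dist V E u v)"
    unfolding dist_def by (rule LeastI_ex)
  then show ?thesis using that is_walk_iff_walk by blast
qed

lemma vheight_eq: "v \<in> V \<Longrightarrow> h v = (LEAST k. \<exists>l. is_leaf V E l \<and> dist V E v l = k)"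
  using nbhd_nonempty unfolding vheight_def by simp

lemma nearest_leaf:
  assumes "v \<in> V"
  obtains l where "is_leaf V E l" "dist V E v l = h v"
proof -
  obtain l where "is_leaf V E l" using leaf_exists by blast
  then have "\<exists>k l. is_leaf V E l \<and> dist V E v l = k" by blast
  then have "\<exists>l. is_leaf V E l \<and> dist V E v l = (LEAST k. \<exists>l. is_leaf V E l \<and> dist V E v l = k)"
    by (rule LeastI_ex)
  then show ?thesis using that vheight_eq[OF assms] by auto
qed

lemma vheight_le_dist:
  assumes "v \<in> V" "is_leaf V E l"
  shows "h v \<le> dist V E v l"
proof -
  have "\<exists>l'. is_leaf V E l' \<and> dist V E v l' = dist V E v l" using assms(2) by blast
  then show ?thesis unfolding vheight_eq[OF assms(1)] by (rule Least_le)
qed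

lemma vheight_eq_0_iff:
  assumes "v \<in> V"
  shows "h v = 0 \<longleftrightarrow> is_leaf V E v"
proof
  assume "h v = 0"
  then obtain l where l: "is_leaf V E l" "dist V E v l = 0" using nearest_leaf[OF assms] by auto
  then have "l \<in> V" unfolding is_leaf_def by blast
  then obtain xs where "walk V E xs" "hd xs = v" "last xs = l" "length xs = Suc (dist V E v l)"
    using walk_of_dist[OF assms] by blast
  then have "v = l" using l(2) by (cases xs) auto
  then show "is_leaf V E v" using l(1) by simp
next
  assume "is_leaf V E v"
  have "dist V E v v \<le> 0" using dist_le_walk[of V E "[v]"] assms by simp
  then show "h v = 0" using vheight_le_dist[OF assms \<open>is_leaf V E v\<close>] by simp
qed

lemma other_neighbour:
  assumes "{v, a} \<in> E" "h v \<noteq> 0"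
  shows "\<exists>b. {v, b} \<in> E \<and> b \<noteq> a"
proof -
  have "v \<in> V" "a \<in> N v" using assms(1) edge_vertices by (auto simp: mem_nbhd_iff insert_commute)
  moreover have "N v \<noteq> {a}"
    using assms(2) vheight_eq_0_iff[OF \<open>v \<in> V\<close>] \<open>v \<in> V\<close> unfolding is_leaf_def by auto
  ultimately obtain b where "b \<in> N v" "b \<noteq> a" by blast
  then show ?thesis by (auto simp: mem_nbhd_iff insert_commute)
qed

lemma vheight_edge_le:
  assumes "{a, b} \<in> E"
  shows "h a \<le> Suc (h b)"
proof -
  have "a \<in> V" "b \<in> V" using edge_vertices[OF assms] by auto
  obtain l where l: "is_leaf V E l" "dist V E b l = h b" using nearest_leaf[OF \<open>b \<in> V\<close>] by blast
  then have "l \<in> V" unfolding is_leaf_def by blast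
  obtain xs where xs: "walk V E xs" "hd xs = b" "last xs = l" "length xs = Suc (dist V E b l)"
    using walk_of_dist[OF \<open>b \<in> V\<close> \<open>l \<in> V\<close>] by blast
  have "walk V E (a # xs)" using walk_Cons[OF xs(1)] xs(2) assms \<open>a \<in> V\<close> by simp
  then have "dist V E a l \<le> Suc (h b)" using dist_le_walk[of V E "a # xs"] xs l(2) walk_not_Nil by fastforce
  then show ?thesis using vheight_le_dist[OF \<open>a \<in> V\<close> l(1)] by simp
qed

lemma lower_neighbour_exists:
  assumes "v \<in> V" "h v = Suc k"
  shows "\<exists>n. {v, n} \<in> E \<and> h n = k"
proof -
  obtain l where l: "is_leaf V E l" "dist V E v l = h v" using nearest_leaf[OF assms(1)] by blast
  then have "l \<in> V" unfolding is_leaf_def by blast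
  obtain xs where xs: "walk V E xs" "hd xs = v" "last xs = l" "length xs = Suc (dist V E v l)"
    using walk_of_dist[OF assms(1) \<open>l \<in> V\<close>] by blast
  then obtain n ys where xs_eq: "xs = v # n # ys"
    using l(2) assms(2) by (cases xs rule: remdups_adj.cases) auto
  then have vn: "{v, n} \<in> E" and "walk V E (n # ys)" using xs(1) by auto
  then have "dist V E n l \<le> k" using dist_le_walk[of V E "n # ys"] xs xs_eq l(2) assms(2) by simp
  then have "h n \<le> k" using vheight_le_dist[of n l] l(1) edge_vertices[OF vn] by fastforce
  moreover have "h v \<le> Suc (h n)" using vheight_edge_le[OF vn] .
  ultimately show ?thesis using vn assms(2) by auto
qed

lemma vheight_attained:
  assumes "v \<in> V" "k \<le> h v"
  shows "\<exists>y\<in>V. h y = k"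
  using assms
proof (induction "h v" arbitrary: v)
  case 0
  then show ?case by auto
next
  case (Suc n)
  show ?case
  proof (cases "k = Suc n")
    case True
    then show ?thesis using Suc.hyps(2) Suc.prems(1) by metis
  next
    case False
    obtain m where "{v, m} \<in> E" "h m = n" using lower_neighbour_exists Suc.hyps(2) Suc.prems(1) by metis
    then show ?thesis using Suc.hyps(1)[of m] edge_vertices False Suc.hyps(2) Suc.prems(2) by auto
  qed
qed

text \<open>A neighbour one level closer to the leaves; unspecified for leaves and outside \<open>V\<close>.\<close>

definition lower :: "'a \<Rightarrow> 'a" where
  "lower v = (SOME n. {v, n} \<in> E \<and> Suc (h n) = h v)"

lemma lower_neighbour:
  assumes "v \<in> V" "h v \<noteq> 0"
  shows "{v, lower v} \<in> E" "Suc (h (lower v)) = h v"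
proof -
  obtain k where "h v = Suc k" using assms(2) not0_implies_Suc by blast
  then have "\<exists>n. {v, n} \<in> E \<and> Suc (h n) = h v" using lower_neighbour_exists[OF assms(1)] by auto
  then show "{v, lower v} \<in> E" "Suc (h (lower v)) = h v"
    unfolding lower_def by (metis (mono_tags, lifting) someI_ex)+
qed

lemma leaf_lower:
  assumes "u \<in> V" "h u = 1"
  shows "is_leaf V E (lower u)" "N (lower u) = {u}"
proof -
  have "{u, lower u} \<in> E" "h (lower u) = 0" using lower_neighbour[OF assms(1)] assms(2) by auto
  then show "is_leaf V E (lower u)" using vheight_eq_0_iff edge_vertices by blast
  then show "N (lower u) = {u}" using nbhd_leaf \<open>{u, lower u} \<in> E\<close> by (simp add: insert_commute)
qed

lemma lower_lower:
  assumes "w \<in> V" "h w = 2"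
  shows "{w, lower w} \<in> E" "h (lower w) = 1" "{lower w, lower (lower w)} \<in> E"
    "N (lower (lower w)) = {lower w}" "h (lower (lower w)) = 0"
proof -
  show "{w, lower w} \<in> E" "h (lower w) = 1" using lower_neighbour[OF assms(1)] assms(2) by auto
  then have "lower w \<in> V" using edge_vertices by blast
  then show "{lower w, lower (lower w)} \<in> E" "h (lower (lower w)) = 0"
    using lower_neighbour[of "lower w"] \<open>h (lower w) = 1\<close> by auto
  show "N (lower (lower w)) = {lower w}" using leaf_lower \<open>lower w \<in> V\<close> \<open>h (lower w) = 1\<close> by blast
qed

lemma inj_on_lower_lower:
  assumes "\<forall>z\<in>Z. {y, z} \<in> E \<and> {z, w z} \<in> E \<and> w z \<noteq> y \<and> h (w z) = 2" "h y \<noteq> 1"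
  shows "inj_on (\<lambda>z. lower (lower (w z))) Z"
proof
  fix z z' assume z: "z \<in> Z" "z' \<in> Z" and eq: "lower (lower (w z)) = lower (lower (w z'))"
  have "w z \<in> V" "w z' \<in> V" "h (w z) = 2" "h (w z') = 2" using assms(1) z edge_vertices by blast+
  note paths = lower_lower[OF \<open>w z \<in> V\<close> \<open>h (w z) = 2\<close>] lower_lower[OF \<open>w z' \<in> V\<close> \<open>h (w z') = 2\<close>]
  have "lower (w z) = lower (w z')" using paths(4) paths(9) eq by (metis singleton_inject)
  moreover have "y \<notin> set [z, w z, lower (w z)]" "y \<notin> set [z', w z', lower (w z')]"
    using assms z edge_vertices paths(2,7) by fastforce+
  ultimately show "z = z'"
    using branch_ends_distinct[of y z z' "[z, w z, lower (w z)]" "[z', w z', lower (w z')]"]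
      assms(1) z paths edge_vertices by (auto simp: insert_commute)
qed

lemma height1_subset_td_set:
  assumes "td_set V E D"
  shows "height_class V E 1 \<subseteq> D"
proof
  fix u assume "u \<in> height_class V E 1"
  then have u: "u \<in> V" "h u = 1" unfolding height_class_def by auto
  then have "lower u \<in> V" "N (lower u) \<inter> V = {u}"
    using leaf_lower[OF u] unfolding is_leaf_def by auto
  moreover have "D \<subseteq> V" using assms unfolding td_set_def by blast
  ultimately show "u \<in> D" using td_set_mem_if_unique_neighbour[OF assms] by blast
qed

lemma minimal_td_set_leaf_unique:
  assumes "minimal_td_set V E D" "l \<in> D" "is_leaf V E l" "{l, u} \<in> E" "b \<in> D" "{b, u} \<in> E"
  shows "b = l"
proof -
  obtain v where "{v, l} \<in> E" and only_l: "\<And>y. y \<in> D \<Longrightarrow> {v, y} \<in> E \<Longrightarrow> y = l"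
    using minimal_td_set_private_neighbour[OF assms(1,2)] by blast
  then have "v = u" using leaf_neighbour_unique[OF assms(3)] assms(4) by (simp add: insert_commute)
  then show "b = l" using only_l assms(5,6) by (simp add: insert_commute)
qed

end

section \<open>Balanced trees\<close>

locale balanced_tree = nontrivial_tree +
  assumes balanced: "balanced V E"
begin

declare walk.simps(3)[simp del] walk_Cons_Cons_iff[simp]

lemma vheight_edge: "{a, b} \<in> E \<Longrightarrow> h a = Suc (h b) \<or> h b = Suc (h a)"
  using balanced vheight_edge_le[of a b] vheight_edge_le[of b a] edge_vertices
  unfolding balanced_def by (fastforce simp: insert_commute)

lemma odd_vheight_edge: "{a, b} \<in> E \<Longrightarrow> odd (h a) \<longleftrightarrow> even (h b)"
  using vheight_edge by fastforce

lemma minimal_td_set_no_height3: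
  assumes "\<forall>v\<in>V. h v \<le> 3" "minimal_td_set V E D" "x \<in> D"
  shows "h x \<noteq> 3"
proof
  assume "h x = 3"
  obtain v where v: "v \<in> V" "{v, x} \<in> E" and only_x: "\<And>y. y \<in> D \<Longrightarrow> {v, y} \<in> E \<Longrightarrow> y = x"
    using minimal_td_set_private_neighbour[OF assms(2,3)] by blast
  have "h v \<le> 3" using assms(1) v(1) by blast
  then have "h v = 2" using vheight_edge[OF v(2)] \<open>h x = 3\<close> by linarith
  then have "{v, lower v} \<in> E" "h (lower v) = 1" using lower_neighbour[OF v(1)] by auto
  moreover have "lower v \<in> height_class V E 1"
    using calculation edge_vertices unfolding height_class_def by blast
  then have "lower v \<in> D"
    using height1_subset_td_set assms(2) unfolding minimal_td_set_def by blast
  ultimately have "lower v = x" using only_x by blast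
  then show False using \<open>h x = 3\<close> \<open>h (lower v) = 1\<close> by simp
qed

lemma ex_unique_height1_neighbour:
  assumes unique1: "\<forall>w\<in>height_class V E 2. card (N w \<inter> height_class V E 1) = 1"
    and "s \<in> V" "h s = 0 \<or> h s = 2"
  shows "\<exists>u. N s \<inter> height_class V E 1 = {u}"
proof (cases "h s = 0")
  case True
  then have "is_leaf V E s" using vheight_eq_0_iff assms(2) by blast
  then have "card (N s) = 1" unfolding is_leaf_def by blast
  then obtain u where "N s = {u}" by (rule card_1_singletonE)
  then have "{s, u} \<in> E" by (auto simp: mem_nbhd_iff insert_commute)
  then have "u \<in> height_class V E 1"
    using vheight_edge[of s u] True edge_vertices unfolding height_class_def by auto
  then show ?thesis using \<open>N s = {u}\<close> by blast
next
  case False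
  then have "s \<in> height_class V E 2" using assms(2,3) unfolding height_class_def by auto
  then have "card (N s \<inter> height_class V E 1) = 1" using unique1 by blast
  then show ?thesis by (rule card_1_singletonE) blast
qed

lemma card_minimal_td_set:
  assumes height: "\<forall>v\<in>V. h v \<le> 3"
    and unique1: "\<forall>w\<in>height_class V E 2. card (N w \<inter> height_class V E 1) = 1"
    and at_most2: "\<forall>u\<in>height_class V E 1. card (N u \<inter> height_class V E 2) \<le> 1"
    and D: "minimal_td_set V E D"
  shows "card D = 2 * card (height_class V E 1)"
proof -
  let ?V1 = "height_class V E 1"
  define S where "S = D - ?V1"
  have td: "td_set V E D" using D unfolding minimal_td_set_def by blast
  then have "D \<subseteq> V" "finite D" using finite_V finite_subset unfolding td_set_def by auto
  have "?V1 \<subseteq> D" using height1_subset_td_set[OF td] .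
  have S: "s \<in> D" "s \<in> V" "h s = 0 \<or> h s = 2" if "s \<in> S" for s
  proof -
    show "s \<in> D" "s \<in> V" using that \<open>D \<subseteq> V\<close> unfolding S_def by auto
    then have "h s \<le> 3" "h s \<noteq> 3" "h s \<noteq> 1"
      using height minimal_td_set_no_height3[OF height D] that unfolding S_def height_class_def by auto
    then show "h s = 0 \<or> h s = 2" by linarith
  qed
  define g where "g s = the_elem (N s \<inter> ?V1)" for s
  have g: "N s \<inter> ?V1 = {g s}" if s: "s \<in> S" for s
  proof -
    obtain u where "N s \<inter> ?V1 = {u}" using ex_unique_height1_neighbour[OF unique1 S(2,3)[OF s]] by blast
    then show ?thesis unfolding g_def by simp
  qed
  have "bij_betw g S ?V1"
    unfolding bij_betw_def
  proof (intro conjI inj_onI equalityI subsetI)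
    fix s s' assume s: "s \<in> S" "s' \<in> S" "g s = g s'"
    let ?u = "g s"
    have edges: "{s, ?u} \<in> E" "{s', ?u} \<in> E"
      using g[OF s(1)] g[OF s(2)] s(3) by (auto simp: mem_nbhd_iff insert_commute)
    show "s = s'"
    proof (cases "h s = 0 \<or> h s' = 0")
      case True
      then show ?thesis
        using minimal_td_set_leaf_unique[OF D] vheight_eq_0_iff S(1,2) s(1,2) edges by metis
    next
      case False
      then have "h s = 2" "h s' = 2" using S(3)[OF s(1)] S(3)[OF s(2)] by auto
      then have "s \<in> N ?u \<inter> height_class V E 2" "s' \<in> N ?u \<inter> height_class V E 2"
        using S(2) s(1,2) edges unfolding height_class_def by (auto simp: mem_nbhd_iff insert_commute)
      moreover have "?u \<in> ?V1" using g[OF s(1)] by blast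
      then have "card (N ?u \<inter> height_class V E 2) \<le> Suc 0" using at_most2 by simp
      ultimately show ?thesis using finite_nbhd by (auto simp: card_le_Suc0_iff_eq)
    qed
  next
    fix u assume "u \<in> g ` S"
    then show "u \<in> ?V1" using g by blast
  next
    fix u assume u: "u \<in> ?V1"
    then obtain x where x: "x \<in> D" "{u, x} \<in> E" using td unfolding td_set_iff height_class_def by blast
    then have "h x \<noteq> 1" using vheight_edge u unfolding height_class_def by fastforce
    then have "x \<in> S" using x unfolding S_def height_class_def by blast
    moreover have "u \<in> N x \<inter> ?V1" using x u by (simp add: mem_nbhd_iff)
    ultimately show "u \<in> g ` S" using g by blast
  qed
  then have "card S = card ?V1" by (rule bij_betw_same_card)
  moreover have "card D = card ?V1 + card S"
    using card_Un_disjoint[of ?V1 S] \<open>?V1 \<subseteq> D\<close> \<open>finite D\<close> finite_subset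
    unfolding S_def by (metis Diff_disjoint Un_Diff_cancel finite_Diff sup.absorb2)
  ultimately show ?thesis by simp
qed

text \<open>No vertex of odd height is adjacent to \<open>Q\<close>. Hence vertices of even height are dominated, and
  an odd vertex off the walks has two neighbours, at most one of which is adjacent to \<open>Q\<close>.\<close>

lemma td_set_excluding_nbhd_set:
  assumes walks: "\<forall>ws\<in>Ws. walk V E ws \<and> last ws = c"
    and Q: "Q \<subseteq> (\<Union>ws\<in>Ws. set ws)" "\<forall>q\<in>Q. odd (h q)"
    and F: "F \<subseteq> V" "\<forall>k\<in>(\<Union>ws\<in>Ws. set ws). odd (h k) \<longrightarrow> (\<exists>f\<in>F. {k, f} \<in> E)"
  shows "td_set V E ((V - nbhd_set V E Q) \<union> F)"
  unfolding td_set_iff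
proof (intro conjI ballI)
  let ?K = "\<Union>ws\<in>Ws. set ws"
  have odd_not_excluded: "n \<notin> nbhd_set V E Q" if "odd (h n)" for n
    using that Q(2) odd_vheight_edge unfolding nbhd_set_def nbhd_def by blast
  show "(V - nbhd_set V E Q) \<union> F \<subseteq> V" using F(1) by blast
  fix v assume "v \<in> V"
  consider "even (h v)" | "odd (h v)" "v \<in> ?K" | "odd (h v)" "v \<notin> ?K" by blast
  then show "\<exists>x\<in>(V - nbhd_set V E Q) \<union> F. {v, x} \<in> E"
  proof cases
    case 1
    obtain n where "n \<in> N v" using nbhd_nonempty[OF \<open>v \<in> V\<close>] by blast
    then have "{v, n} \<in> E" "n \<in> V" using edge_vertices by (auto simp: mem_nbhd_iff insert_commute)
    then show ?thesis using 1 odd_not_excluded odd_vheight_edge by blast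
  next
    case 2
    then show ?thesis using F(2) by blast
  next
    case 3
    obtain n1 where "n1 \<in> N v" using nbhd_nonempty[OF \<open>v \<in> V\<close>] by blast
    then have vn1: "{v, n1} \<in> E" by (simp add: mem_nbhd_iff insert_commute)
    have "h v \<noteq> 0" using odd_pos[OF 3(1)] by simp
    then obtain n2 where vn2: "{v, n2} \<in> E" "n2 \<noteq> n1" using other_neighbour vn1 by blast
    have "nbhd_set V E Q \<subseteq> nbhd_set V E ?K" using Q(1) unfolding nbhd_set_def by blast
    then have "n1 \<notin> nbhd_set V E Q \<or> n2 \<notin> nbhd_set V E Q"
      using hub_walks_neighbour_unique[OF walks 3(2) vn1 vn2(1)] vn2(2) by blast
    then show ?thesis using vn1 vn2(1) edge_vertices by blast
  qed
qed

lemma not_unmixed_by_excluding_nbhd_set: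
  assumes walks: "\<forall>ws\<in>Ws. walk V E ws \<and> last ws = c"
    and Q: "Q \<subseteq> (\<Union>ws\<in>Ws. set ws)" "\<forall>q\<in>Q. odd (h q)"
    and F: "F \<subseteq> V" "\<forall>k\<in>(\<Union>ws\<in>Ws. set ws). odd (h k) \<longrightarrow> (\<exists>f\<in>F. {k, f} \<in> E)"
    and forced: "\<forall>f\<in>F. \<exists>q\<in>Q. N q \<inter> F = {f}"
    and "R \<subseteq> F" "A \<subseteq> V" "card A < card R"
    and cover: "\<forall>r\<in>R. \<forall>v. {v, r} \<in> E \<longrightarrow> (\<exists>x\<in>A \<union> (F - R). {v, x} \<in> E)"
  shows "\<not> unmixed V E"
proof (rule not_unmixed_by_exchange[OF finite_V td_set_excluding_nbhd_set[OF walks Q F]])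
  let ?C = "(V - nbhd_set V E Q) \<union> F"
  show "\<forall>f\<in>F. \<exists>p\<in>V. N p \<inter> ?C = {f}"
  proof
    fix f assume "f \<in> F"
    then obtain q where "q \<in> Q" "N q \<inter> F = {f}" using forced by blast
    moreover have "N q \<subseteq> nbhd_set V E Q" using \<open>q \<in> Q\<close> unfolding nbhd_set_def by blast
    moreover have "q \<in> V" using \<open>q \<in> Q\<close> Q(1) walks walk_set by blast
    ultimately show "\<exists>p\<in>V. N p \<inter> ?C = {f}" by (intro bexI[of _ q]) auto
  qed
qed (use assms in auto)

text \<open>The exchange removes the hub \<open>y\<close> and the leaves at the ends of the pendant paths
  \<open>y, z, wz z, lower (wz z), lower (lower (wz z))\<close>, and adds the vertices \<open>wz z\<close>.\<close>

lemma not_unmixed_by_pendant_paths: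
  assumes y: "even (h y)"
    and Z: "\<forall>z\<in>Z. {y, z} \<in> E \<and> {z, wz z} \<in> E \<and> wz z \<noteq> y \<and> h (wz z) = 2"
    and walks: "\<forall>ws\<in>Ws. walk V E ws \<and> last ws = y"
    and Q: "Q \<subseteq> (\<Union>ws\<in>Ws. set ws) \<union> Z" "\<forall>q\<in>Q. odd (h q) \<and> h q \<noteq> 1"
    and F: "y \<in> F" "F \<subseteq> V" "\<forall>k\<in>(\<Union>ws\<in>Ws. set ws). odd (h k) \<longrightarrow> (\<exists>f\<in>F. {k, f} \<in> E)"
    and forced: "\<forall>f\<in>F. \<exists>q\<in>Q. N q \<inter> F = {f}"
    and F_far: "\<forall>f\<in>F. h f \<noteq> 0 \<and> (\<forall>z\<in>Z. {f, lower (wz z)} \<notin> E)"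
    and cover: "\<forall>v. {v, y} \<in> E \<longrightarrow> v \<in> Z \<or> (\<exists>f\<in>F - {y}. {v, f} \<in> E)"
  shows "\<not> unmixed V E"
proof -
  define uz lz where "uz z = lower (wz z)" and "lz z = lower (uz z)" for z
  have path: "{wz z, uz z} \<in> E" "h (uz z) = 1" "{uz z, lz z} \<in> E" "N (lz z) = {uz z}"
    "h (lz z) = 0" if "z \<in> Z" for z
    using lower_lower[of "wz z"] Z that edge_vertices unfolding uz_def lz_def by auto
  have "y \<in> V" using F by blast
  have "inj_on lz Z"
    using inj_on_lower_lower[of Z y wz] Z y unfolding lz_def uz_def by fastforce
  have lz_nbhd: "lz z \<in> N v \<longleftrightarrow> v = uz z" if "z \<in> Z" for z v
    using path(4)[OF that] mem_nbhd_sym by blast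
  have "lz ` Z \<inter> F = {}" using path(5) F_far by force
  show ?thesis
  proof (rule not_unmixed_by_excluding_nbhd_set[where Ws = "Ws \<union> (\<lambda>z. [uz z, wz z, z, y]) ` Z"
        and c = y and Q = "Q \<union> uz ` Z" and F = "F \<union> lz ` Z" and R = "insert y (lz ` Z)" and A = "wz ` Z"])
    show "\<forall>ws\<in>Ws \<union> (\<lambda>z. [uz z, wz z, z, y]) ` Z. walk V E ws \<and> last ws = y"
      using walks Z path \<open>y \<in> V\<close> by (auto simp: insert_commute)
    show "Q \<union> uz ` Z \<subseteq> (\<Union>ws\<in>Ws \<union> (\<lambda>z. [uz z, wz z, z, y]) ` Z. set ws)"
      using Q(1) by auto
    show "\<forall>q\<in>Q \<union> uz ` Z. odd (h q)" using Q(2) path(2) by auto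
    show "F \<union> lz ` Z \<subseteq> V" using F(2) path(3) edge_vertices by blast
    show "\<forall>k\<in>(\<Union>ws\<in>Ws \<union> (\<lambda>z. [uz z, wz z, z, y]) ` Z. set ws).
        odd (h k) \<longrightarrow> (\<exists>f\<in>F \<union> lz ` Z. {k, f} \<in> E)"
    proof (intro ballI impI)
      fix k assume "k \<in> (\<Union>ws\<in>Ws \<union> (\<lambda>z. [uz z, wz z, z, y]) ` Z. set ws)" "odd (h k)"
      then consider "k \<in> (\<Union>ws\<in>Ws. set ws)" | z where "z \<in> Z" "k = uz z" | z where "z \<in> Z" "k = z"
        using y Z by auto
      then show "\<exists>f\<in>F \<union> lz ` Z. {k, f} \<in> E"
      proof cases
        case 1
        then show ?thesis using F(3) \<open>odd (h k)\<close> by blast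
      next
        case (2 z)
        then show ?thesis using path(3)[OF 2(1)] by blast
      next
        case (3 z)
        then have "{y, k} \<in> E" using Z by blast
        then show ?thesis using F(1) by (intro bexI[of _ y]) (simp_all add: insert_commute)
      qed
    qed
    have Q_forced: "N q \<inter> (F \<union> lz ` Z) = N q \<inter> F" if "q \<in> Q" for q
      using Q(2) that lz_nbhd path(2) by fastforce
    have uz_forced: "N (uz z) \<inter> (F \<union> lz ` Z) = {lz z}" if z: "z \<in> Z" for z
    proof -
      have "N (uz z) \<inter> F = {}" using F_far z mem_nbhd_iff unfolding uz_def by blast
      moreover have "lz z' \<in> N (uz z) \<longleftrightarrow> lz z' = lz z" if "z' \<in> Z" for z'
        using lz_nbhd[OF that] path(3,4)[OF z] mem_nbhd_sym unfolding lz_def by auto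
      ultimately show ?thesis using z by auto
    qed
    show "\<forall>f\<in>F \<union> lz ` Z. \<exists>q\<in>Q \<union> uz ` Z. N q \<inter> (F \<union> lz ` Z) = {f}"
    proof
      fix f assume "f \<in> F \<union> lz ` Z"
      then consider "f \<in> F" | z where "z \<in> Z" "f = lz z" by blast
      then show "\<exists>q\<in>Q \<union> uz ` Z. N q \<inter> (F \<union> lz ` Z) = {f}"
      proof cases
        case 1
        then obtain q where "q \<in> Q" "N q \<inter> F = {f}" using forced by blast
        then show ?thesis using Q_forced by blast
      next
        case (2 z)
        then show ?thesis using uz_forced by blast
      qed
    qed
    show "insert y (lz ` Z) \<subseteq> F \<union> lz ` Z" using F(1) by blast
    show "wz ` Z \<subseteq> V" using Z edge_vertices by blast
    have "Z \<subseteq> N y" using Z by (auto simp: mem_nbhd_iff insert_commute)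
    then have "finite Z" using finite_nbhd finite_subset by blast
    moreover have "y \<notin> lz ` Z" using \<open>lz ` Z \<inter> F = {}\<close> F(1) by blast
    ultimately show "card (wz ` Z) < card (insert y (lz ` Z))"
      using card_image[OF \<open>inj_on lz Z\<close>] card_image_le[of Z wz] by simp
    show "\<forall>r\<in>insert y (lz ` Z). \<forall>v. {v, r} \<in> E \<longrightarrow>
        (\<exists>x\<in>wz ` Z \<union> (F \<union> lz ` Z - insert y (lz ` Z)). {v, x} \<in> E)"
    proof (intro ballI allI impI)
      fix r v assume r: "r \<in> insert y (lz ` Z)" and rv: "{v, r} \<in> E"
      show "\<exists>x\<in>wz ` Z \<union> (F \<union> lz ` Z - insert y (lz ` Z)). {v, x} \<in> E"
      proof (cases "r = y")
        case True
        with rv have "{v, y} \<in> E" by simp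
        then consider "v \<in> Z" | f where "f \<in> F - {y}" "{v, f} \<in> E" using cover by blast
        then show ?thesis
        proof cases
          case 1
          then have "{v, wz v} \<in> E" using Z by blast
          then show ?thesis using 1 by blast
        next
          case (2 f)
          then have "f \<notin> lz ` Z" using \<open>lz ` Z \<inter> F = {}\<close> by blast
          then show ?thesis using 2 by blast
        qed
      next
        case False
        then obtain z where z: "z \<in> Z" "r = lz z" using r by auto
        then have "lz z \<in> N v" using rv by (simp add: mem_nbhd_iff insert_commute)
        then have "v = uz z" using lz_nbhd[OF z(1)] by blast
        then have "{v, wz z} \<in> E" using path(1)[OF z(1)] by (simp add: insert_commute)
        then show ?thesis using z(1) by blast
      qed
    qed
  qed
qed

lemma not_unmixed_if_two_height1_neighbours:
  assumes "{w, u1} \<in> E" "{w, u2} \<in> E" "h u1 = 1" "h u2 = 1" "u1 \<noteq> u2"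
  shows "\<not> unmixed V E"
proof -
  have V: "u1 \<in> V" "u2 \<in> V" "w \<in> V" using edge_vertices assms(1,2) by blast+
  define l1 l2 where "l1 = lower u1" and "l2 = lower u2"
  have l1: "{u1, l1} \<in> E" "N l1 = {u1}" and l2: "{u2, l2} \<in> E" "N l2 = {u2}"
    using lower_neighbour leaf_lower V assms(3,4) unfolding l1_def l2_def by auto
  have "l1 \<noteq> l2" using l1(2) l2(2) assms(5) by auto
  have "even (h w)" using odd_vheight_edge[OF assms(1)] assms(3) by simp
  have only_leaf: "v = u" if "N l = {u}" "{v, l} \<in> E" for v u l
    using that mem_nbhd_iff by blast
  show ?thesis
  proof (rule not_unmixed_by_excluding_nbhd_set[where Ws = "{[u1, w], [u2, w]}" and c = w
        and Q = "{u1, u2}" and F = "{l1, l2}" and R = "{l1, l2}" and A = "{w}"])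
    show "\<forall>ws\<in>{[u1, w], [u2, w]}. walk V E ws \<and> last ws = w"
      using assms(1,2) V by (auto simp: insert_commute)
    show "\<forall>k\<in>(\<Union>ws\<in>{[u1, w], [u2, w]}. set ws). odd (h k) \<longrightarrow> (\<exists>f\<in>{l1, l2}. {k, f} \<in> E)"
      using l1(1) l2(1) \<open>even (h w)\<close> by auto
    have "l1 \<in> N u1" "l2 \<notin> N u1" "l2 \<in> N u2" "l1 \<notin> N u2"
      using only_leaf[OF l2(2), of u1] only_leaf[OF l1(2), of u2] l1(1) l2(1) assms(5)
      by (auto simp: mem_nbhd_iff insert_commute)
    then show "\<forall>f\<in>{l1, l2}. \<exists>q\<in>{u1, u2}. N q \<inter> {l1, l2} = {f}" by blast
    show "\<forall>r\<in>{l1, l2}. \<forall>v. {v, r} \<in> E \<longrightarrow> (\<exists>x\<in>{w} \<union> ({l1, l2} - {l1, l2}). {v, x} \<in> E)"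
      using only_leaf[OF l1(2)] only_leaf[OF l2(2)] assms(1,2) by (auto simp: insert_commute)
  qed (use V assms(3,4) \<open>l1 \<noteq> l2\<close> l1 l2 edge_vertices in auto)
qed

lemma not_unmixed_if_two_height2_neighbours:
  assumes height: "\<forall>v\<in>V. h v \<le> 3"
    and w: "{u, w1} \<in> E" "{u, w2} \<in> E" "h w1 = 2" "h w2 = 2" "w1 \<noteq> w2"
    and only_u: "\<And>w v. w \<in> {w1, w2} \<Longrightarrow> {w, v} \<in> E \<Longrightarrow> h v = 1 \<Longrightarrow> v = u"
  shows "\<not> unmixed V E"
proof -
  have V: "u \<in> V" "w1 \<in> V" "w2 \<in> V" using w edge_vertices by blast+
  have "{w1, lower w1} \<in> E" "h (lower w1) = 1" using lower_neighbour[OF V(2)] w(3) by auto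
  then have "h u = 1" using only_u[of w1 "lower w1"] by simp
  have height3: "h v = 3" if "w \<in> {w1, w2}" "{w, v} \<in> E" "v \<noteq> u" for w v
    using vheight_edge[OF that(2)] only_u[OF that(1,2)] that(1,3) w(3,4) by auto
  have "{w1, u} \<in> E" "{w2, u} \<in> E" using w(1,2) by (simp_all add: insert_commute)
  then obtain x1 x2 where x1: "{w1, x1} \<in> E" "x1 \<noteq> u" and x2: "{w2, x2} \<in> E" "x2 \<noteq> u"
    using other_neighbour w(3,4) by (metis zero_neq_numeral)
  have x_heights: "h x1 = 3" "h x2 = 3" using height3 x1 x2 by auto
  define Z where "Z = {z. {w1, z} \<in> E \<and> z \<noteq> u}"
  have Z: "{w1, z} \<in> E" "z \<in> V" "h z = 3" if "z \<in> Z" for z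
    using that height3 edge_vertices unfolding Z_def by auto
  have "\<exists>v. {z, v} \<in> E \<and> v \<noteq> w1" if "z \<in> Z" for z
  proof -
    have "{z, w1} \<in> E" using Z(1)[OF that] by (simp add: insert_commute)
    then show ?thesis using other_neighbour Z(3)[OF that] by simp
  qed
  then obtain wz where wz: "\<forall>z\<in>Z. {z, wz z} \<in> E \<and> wz z \<noteq> w1" by metis
  have wz_height: "h (wz z) = 2" if "z \<in> Z" for z
    using vheight_edge[of z "wz z"] wz that Z(3)[OF that] height edge_vertices by fastforce
  have lower_ne_u: "lower (wz z) \<noteq> u" if z: "z \<in> Z" for z
  proof
    assume "lower (wz z) = u"
    have "wz z \<in> V" using wz z edge_vertices by blast
    then have "{wz z, lower (wz z)} \<in> E" "h (lower (wz z)) = 1"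
      using lower_neighbour[of "wz z"] wz_height[OF z] by auto
    then have "walk V E [z, wz z, lower (wz z)]" using wz z edge_vertices by simp
    moreover have "w1 \<notin> set [z, wz z, lower (wz z)]"
      using Z(1)[OF z] wz z \<open>h (lower (wz z)) = 1\<close> w(3) edge_vertices by auto
    moreover have "z \<noteq> u" using Z(3)[OF z] \<open>h u = 1\<close> by auto
    ultimately show False
      using branch_ends_distinct[of w1 z u "[z, wz z, lower (wz z)]" "[u]"] Z(1)[OF z] w(1) V
        \<open>lower (wz z) = u\<close> by (auto simp: insert_commute)
  qed
  have "w2 \<notin> N x1" "w1 \<notin> N x2"
    using branch_ends_distinct[of u w1 w2 "[w1, x1]" "[w2, x1]"]
      branch_ends_distinct[of u w1 w2 "[w1, x2]" "[w2, x2]"]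
      x1 x2 w V edge_vertices height3 \<open>h u = 1\<close> by (auto simp: mem_nbhd_iff insert_commute)
  moreover have "w1 \<in> N x1" "w2 \<in> N x2" using x1(1) x2(1) by (simp_all add: mem_nbhd_iff insert_commute)
  ultimately have forced: "N x1 \<inter> {w1, w2} = {w1}" "N x2 \<inter> {w1, w2} = {w2}" by auto
  \<comment> \<open>\<open>w2\<close>, forced by \<open>x2\<close>, keeps \<open>u\<close> dominated once \<open>w1\<close> is exchanged.\<close>
  show ?thesis
  proof (rule not_unmixed_by_pendant_paths[where y = w1 and Z = Z and wz = wz
        and Ws = "{[x2, w2, u, w1]}" and Q = "{x1, x2}" and F = "{w1, w2}"])
    show "\<forall>z\<in>Z. {w1, z} \<in> E \<and> {z, wz z} \<in> E \<and> wz z \<noteq> w1 \<and> h (wz z) = 2"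
      using Z(1) wz wz_height by blast
    show "\<forall>ws\<in>{[x2, w2, u, w1]}. walk V E ws \<and> last ws = w1"
      using x2 w V by (simp add: insert_commute)
    show "{x1, x2} \<subseteq> (\<Union>ws\<in>{[x2, w2, u, w1]}. set ws) \<union> Z" using x1 unfolding Z_def by auto
    show "\<forall>k\<in>(\<Union>ws\<in>{[x2, w2, u, w1]}. set ws). odd (h k) \<longrightarrow> (\<exists>f\<in>{w1, w2}. {k, f} \<in> E)"
      using x2 w by (auto simp: insert_commute)
    show "\<forall>f\<in>{w1, w2}. \<exists>q\<in>{x1, x2}. N q \<inter> {w1, w2} = {f}" using forced by blast
    have "h (lower (wz z)) = 1" if "z \<in> Z" for z
      using lower_neighbour[of "wz z"] wz_height[OF that] wz that edge_vertices by auto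
    then show "\<forall>f\<in>{w1, w2}. h f \<noteq> 0 \<and> (\<forall>z\<in>Z. {f, lower (wz z)} \<notin> E)"
      using only_u lower_ne_u w(3,4) by fastforce
    show "\<forall>v. {v, w1} \<in> E \<longrightarrow> v \<in> Z \<or> (\<exists>f\<in>{w1, w2} - {w1}. {v, f} \<in> E)"
      using w(2,5) unfolding Z_def by (auto simp: insert_commute)
  qed (use V w x_heights in auto)
qed

lemma not_unmixed_if_height4:
  assumes y: "y \<in> V" "h y = 4"
  shows "\<not> unmixed V E"
proof -
  define Z where "Z = {z. {y, z} \<in> E \<and> h z = 3}"
  define P where "P = {p. {y, p} \<in> E \<and> h p = 5}"
  define x where "x = lower y"
  have Z: "{y, z} \<in> E" "z \<in> V" "h z = 3" if "z \<in> Z" for z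
    using that edge_vertices unfolding Z_def by auto
  have P: "{y, p} \<in> E" "p \<in> V" "h p = 5" if "p \<in> P" for p
    using that edge_vertices unfolding P_def by auto
  have "x \<in> Z" using lower_neighbour[OF y(1)] y(2) unfolding x_def Z_def by simp
  \<comment> \<open>Once \<open>y\<close> is exchanged, a neighbour \<open>p\<close> above \<open>y\<close> is dominated by \<open>q p\<close>, forced by \<open>s p\<close>.\<close>
  have "\<exists>q. {p, q} \<in> E \<and> q \<noteq> y" if p: "p \<in> P" for p
  proof -
    have "{p, y} \<in> E" using P(1)[OF p] by (simp add: insert_commute)
    then show ?thesis using other_neighbour P(3)[OF p] by simp
  qed
  then obtain q where q: "\<forall>p\<in>P. {p, q p} \<in> E \<and> q p \<noteq> y" by metis
  have q_height: "h (q p) = 4 \<or> h (q p) = 6" "q p \<in> V" if "p \<in> P" for p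
    using vheight_edge[of p "q p"] q that P(3)[OF that] edge_vertices by auto
  have "\<exists>s. {q p, s} \<in> E \<and> s \<noteq> p" if p: "p \<in> P" for p
  proof -
    have "{q p, p} \<in> E" using q p by (simp add: insert_commute)
    moreover have "h (q p) \<noteq> 0" using q_height(1)[OF p] by auto
    ultimately show ?thesis using other_neighbour by blast
  qed
  then obtain s where s: "\<forall>p\<in>P. {q p, s p} \<in> E \<and> s p \<noteq> p" by metis
  have s_height: "odd (h (s p))" "h (s p) \<noteq> 1" "s p \<noteq> y" "s p \<in> V" if p: "p \<in> P" for p
  proof -
    show "odd (h (s p))" "h (s p) \<noteq> 1" "s p \<noteq> y"
      using q_height(1)[OF p] vheight_edge[of "q p" "s p"] s p y(2) by auto
    show "s p \<in> V" using s p edge_vertices by blast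
  qed
  have q_not_adj_x: "q p \<notin> N x" if p: "p \<in> P" for p
  proof
    assume "q p \<in> N x"
    then have "walk V E [x, q p]" "walk V E [p, q p]"
      using q p q_height(2)[OF p] by (auto simp: mem_nbhd_iff insert_commute)
    moreover have "x \<noteq> p" using Z(3)[OF \<open>x \<in> Z\<close>] P(3)[OF p] by auto
    moreover have "y \<notin> set [x, q p]" "y \<notin> set [p, q p]"
      using Z(1)[OF \<open>x \<in> Z\<close>] P(1)[OF p] q p edge_vertices by auto
    ultimately show False using branch_ends_distinct Z(1)[OF \<open>x \<in> Z\<close>] P(1)[OF p] by fastforce
  qed
  have y_not_adj_s: "y \<notin> N (s p)" if p: "p \<in> P" for p
  proof
    assume "y \<in> N (s p)"
    then have "walk V E [y, s p]" "walk V E [q p, s p]"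
      using s p s_height(4)[OF p] by (auto simp: mem_nbhd_iff insert_commute)
    moreover have "p \<notin> set [y, s p]" "p \<notin> set [q p, s p]"
      using P(1)[OF p] q p s p edge_vertices by auto
    ultimately show False
      using branch_ends_distinct[of p y "q p"] P(1)[OF p] q p by (fastforce simp: insert_commute)
  qed
  have q_adj_s: "q p' = q p" if p: "p \<in> P" "p' \<in> P" "q p' \<in> N (s p)" for p p'
  proof (rule ccontr)
    assume "q p' \<noteq> q p"
    then have "p \<noteq> p'" by blast
    have "walk V E [p, q p, s p, q p']" "walk V E [p', q p']"
      using p q s q_height(2) by (auto simp: mem_nbhd_iff insert_commute)
    moreover have "y \<notin> set [p, q p, s p, q p']" "y \<notin> set [p', q p']"
      using P(1) p q s_height(3) edge_vertices by auto
    ultimately show False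
      using branch_ends_distinct[of y p p'] P(1) p \<open>p \<noteq> p'\<close> by fastforce
  qed
  show ?thesis
  proof (rule not_unmixed_by_pendant_paths[where y = y and Z = Z and wz = lower
        and Ws = "(\<lambda>p. [s p, q p, p, y]) ` P" and Q = "insert x (s ` P)" and F = "insert y (q ` P)"])
    show "\<forall>z\<in>Z. {y, z} \<in> E \<and> {z, lower z} \<in> E \<and> lower z \<noteq> y \<and> h (lower z) = 2"
      using Z lower_neighbour y(2) by fastforce
    show "\<forall>ws\<in>(\<lambda>p. [s p, q p, p, y]) ` P. walk V E ws \<and> last ws = y"
      using P q s y(1) by (auto simp: insert_commute)
    show "insert x (s ` P) \<subseteq> (\<Union>ws\<in>(\<lambda>p. [s p, q p, p, y]) ` P. set ws) \<union> Z"
      using \<open>x \<in> Z\<close> by auto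
    show "\<forall>v\<in>insert x (s ` P). odd (h v) \<and> h v \<noteq> 1"
      using Z(3)[OF \<open>x \<in> Z\<close>] s_height by auto
    show "insert y (q ` P) \<subseteq> V" using y(1) q_height(2) by blast
    show "\<forall>k\<in>(\<Union>ws\<in>(\<lambda>p. [s p, q p, p, y]) ` P. set ws). odd (h k) \<longrightarrow> (\<exists>f\<in>insert y (q ` P). {k, f} \<in> E)"
      using P q s q_height(1) y(2) by (fastforce simp: insert_commute)
    have "y \<in> N x" using Z(1)[OF \<open>x \<in> Z\<close>] by (simp add: mem_nbhd_iff insert_commute)
    then have "N x \<inter> insert y (q ` P) = {y}" using q_not_adj_x by blast
    moreover have "N (s p) \<inter> insert y (q ` P) = {q p}" if p: "p \<in> P" for p
    proof -
      have "q p \<in> N (s p)" using s p by (simp add: mem_nbhd_iff insert_commute)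
      moreover have "f = q p" if "f \<in> N (s p) \<inter> insert y (q ` P)" for f
        using that y_not_adj_s[OF p] q_adj_s[OF p] by blast
      ultimately show ?thesis using p by blast
    qed
    ultimately show "\<forall>f\<in>insert y (q ` P). \<exists>v\<in>insert x (s ` P). N v \<inter> insert y (q ` P) = {f}"
      by blast
    have lower2_height: "h (lower (lower z)) = 1" if "z \<in> Z" for z
      using lower_neighbour[of z] lower_neighbour[of "lower z"] Z[OF that] edge_vertices by auto
    have F_height: "h f = 4 \<or> h f = 6" if "f \<in> insert y (q ` P)" for f
      using that y(2) by (auto dest: q_height(1))
    show "\<forall>f\<in>insert y (q ` P). h f \<noteq> 0 \<and> (\<forall>z\<in>Z. {f, lower (lower z)} \<notin> E)"
    proof (intro ballI conjI)
      fix f z assume f: "f \<in> insert y (q ` P)" and z: "z \<in> Z"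
      then show "{f, lower (lower z)} \<notin> E"
        using F_height[OF f] vheight_edge[of f "lower (lower z)"] lower2_height[OF z] by auto
    next
      fix f assume f: "f \<in> insert y (q ` P)"
      show "h f \<noteq> 0" using F_height[OF f] by auto
    qed
    show "\<forall>v. {v, y} \<in> E \<longrightarrow> v \<in> Z \<or> (\<exists>f\<in>insert y (q ` P) - {y}. {v, f} \<in> E)"
    proof (intro allI impI)
      fix v assume "{v, y} \<in> E"
      then have yv: "{y, v} \<in> E" by (simp add: insert_commute)
      then consider "h v = 3" | "h v = 5" using vheight_edge y(2) by fastforce
      then show "v \<in> Z \<or> (\<exists>f\<in>insert y (q ` P) - {y}. {v, f} \<in> E)"
      proof cases
        case 1
        then show ?thesis using yv unfolding Z_def by blast
      next
        case 2
        then have "v \<in> P" using yv unfolding P_def by blast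
        then show ?thesis using q by blast
      qed
    qed
  qed (use y(2) in simp_all)
qed

theorem unmixed_iff:
  "unmixed V E \<longleftrightarrow>
     (\<forall>v\<in>V. h v \<le> 3) \<and>
     (\<forall>w\<in>height_class V E 2. card (N w \<inter> height_class V E 1) = 1) \<and>
     (\<forall>u\<in>height_class V E 1. card (N u \<inter> height_class V E 2) \<le> 1)"
  (is "_ \<longleftrightarrow> ?height \<and> ?unique1 \<and> ?at_most2")
proof
  assume unmixed: "unmixed V E"
  have ?height
  proof (rule ccontr)
    assume "\<not> ?height"
    then obtain v where "v \<in> V" "4 \<le> h v" by force
    then show False using vheight_attained not_unmixed_if_height4 unmixed by blast
  qed
  moreover have ?unique1
  proof
    fix w assume w: "w \<in> height_class V E 2"
    then have "w \<in> V" "h w = 2" unfolding height_class_def by auto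
    then have "{w, lower w} \<in> E" "h (lower w) = 1" using lower_neighbour[of w] by auto
    then have "lower w \<in> N w \<inter> height_class V E 1"
      using edge_vertices unfolding height_class_def by (auto simp: mem_nbhd_iff insert_commute)
    moreover have "a = b" if "a \<in> N w \<inter> height_class V E 1" "b \<in> N w \<inter> height_class V E 1" for a b
      using that not_unmixed_if_two_height1_neighbours[of w a b] unmixed
      unfolding height_class_def by (auto simp: mem_nbhd_iff insert_commute)
    ultimately have "N w \<inter> height_class V E 1 = {lower w}" by blast
    then show "card (N w \<inter> height_class V E 1) = 1" by simp
  qed
  moreover have ?at_most2
  proof
    have only_one: "a = b"
      if "w \<in> height_class V E 2" "a \<in> N w \<inter> height_class V E 1" "b \<in> N w \<inter> height_class V E 1" for w a b
      using \<open>?unique1\<close> that by (metis card_1_singletonE singletonD)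
    fix u assume u: "u \<in> height_class V E 1"
    have "a = b" if "a \<in> N u \<inter> height_class V E 2" "b \<in> N u \<inter> height_class V E 2" for a b
    proof (rule ccontr)
      assume "a \<noteq> b"
      have "v = u" if "w \<in> {a, b}" "{w, v} \<in> E" "h v = 1" for w v
      proof (rule only_one)
        show "w \<in> height_class V E 2" using that(1) \<open>a \<in> _\<close> \<open>b \<in> _\<close> by blast
        show "v \<in> N w \<inter> height_class V E 1" "u \<in> N w \<inter> height_class V E 1"
          using that \<open>a \<in> _\<close> \<open>b \<in> _\<close> u edge_vertices unfolding height_class_def
          by (auto simp: mem_nbhd_iff insert_commute)
      qed
      then show False
        using not_unmixed_if_two_height2_neighbours[OF \<open>?height\<close>, of u a b] \<open>a \<noteq> b\<close> unmixed
          \<open>a \<in> _\<close> \<open>b \<in> _\<close> unfolding height_class_def by (auto simp: mem_nbhd_iff insert_commute)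
    qed
    then show "card (N u \<inter> height_class V E 2) \<le> 1" using finite_nbhd by (simp add: card_le_Suc0_iff_eq)
  qed
  ultimately show "?height \<and> ?unique1 \<and> ?at_most2" by blast
next
  assume "?height \<and> ?unique1 \<and> ?at_most2"
  then show "unmixed V E" using card_minimal_td_set unfolding unmixed_def by metis
qed

end

theorem theorem3p37:
  fixes V :: "'a set" and E :: "'a set set"
  assumes "is_tree V E" and "balanced V E"
  shows "unmixed V E \<longleftrightarrow>
           (tree_height V E \<le> 3 \<and>
            (\<forall>v \<in> height_class V E 2. card (nbhd V E v \<inter> height_class V E 1) = 1) \<and>
            (\<forall>v \<in> height_class V E 1. card (nbhd V E v \<inter> height_class V E 2) \<le> 1))"
proof -
  have "finite V" "V \<noteq> {}" using assms(1) unfolding is_tree_def simple_graph_def by auto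
  show ?thesis
  proof (cases "E = {}")
    case True
    then show ?thesis
      using unmixed_edgeless[OF True \<open>V \<noteq> {}\<close>] vheight_edgeless[OF True]
        tree_height_le_iff[OF \<open>finite V\<close> \<open>V \<noteq> {}\<close>]
      unfolding height_class_def by simp
  next
    case False
    then interpret balanced_tree V E using assms by unfold_locales
    show ?thesis using unmixed_iff tree_height_le_iff[OF \<open>finite V\<close> \<open>V \<noteq> {}\<close>] by simp
  qed
qed

end
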